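(* Let $G$ be a group with a finite generating set $S$, equipped with the word metric $d_S$, and suppose $G$ acts transitively by isometries on a metric space $M$. Fix a basepoint $x_0 \in M$. Suppose that $M$ has asymptotic property C and that there is an integer $n \ge 0$ such that for every $R > 0$, the quasi-stabilizer $W_R(x_0)$ (with the metric restricted from $d_S$) has asymptotic dimension at most $n$. Then $G$ (with the metric $d_S$) has straight finite decomposition complexity.
   Context: The word metric on $G$ with respect to the finite generating set $S$ is $d_S(g,h) = $ the length of a shortest word in $S \cup S^{-1}$ representing $g^{-1}h$. A family $\mathcal{F}$ of subsets of a metric space $X$ is uniformly bounded if there is $R>0$ with $\mathrm{diam}(F) < R$ for all $F \in \mathcal{F}$; for $r>0$, $\mathcal{F}$ is $r$-disjoint if $d(F_1,F_2) > r$ for all distinct $F_1, F_2 \in \mathcal{F}$. A metric space $X$ has asymptotic dimension at most $n$ if for every $r>0$ there exist $n+1$ uniformly bounded, $r$-disjoint families $\mathcal{F}_0,\dots,\mathcal{F}_n$ of subsets of $X$ whose union covers $X$. A metric space $X$ has asymptotic property C if for every sequence of real numbers $0<r_0<r_1<\cdots$ there exist $m \in \mathbb{N}$ and uniformly bounded families $\mathcal{F}_0,\dots,\mathcal{F}_m$ of subsets of $X$ such that each $\mathcal{F}_i$ is $r_i$-disjoint and $\bigcup_{i=0}^m \mathcal{F}_i$ covers $X$. For a group $G$ acting by isometries on $M$, $x \in M$ and $R>0$, the $R$-quasi-stabilizer of $x$ is $W_R(x) = \{ g \in G \mid d_M(x, gx) \le R\}$. For metric families (families of metric spaces) $\mathcal{X},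 \mathcal{Y}$ and $r>0$, $\mathcal{X}$ is $r$-decomposable over $\mathcal{Y}$ if for each $X \in \mathcal{X}$ there exist $r$-disjoint families $\mathcal{U}, \mathcal{V}$ of subsets of $X$ (with the induced metrics) such that $\mathcal{U}\cup\mathcal{V}$ covers $X$ and $\mathcal{U}\cup\mathcal{V} \subseteq \mathcal{Y}$. A metric family $\mathcal{X}$ has straight finite decomposition complexity (sFDC) if for every sequence $0 \le r_1 \le r_2 \le \cdots$ of real numbers there exist $n \in \mathbb{N}$ and metric families $\mathcal{X} = \mathcal{X}_0, \mathcal{X}_1, \dots, \mathcal{X}_n$ such that for each $1 \le i \le n$, $\mathcal{X}_i$ is $r_i$-decomposable over $\mathcal{X}_{i-1}$, and $\mathcal{X}_n$ is uniformly bounded (there is a uniform bound on the diameters of its members). A single metric space $X$ has sFDC if the family $\{X\}$ does. *)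

theory Defs
  imports "HOL-Analysis.Abstract_Metric_Spaces" "HOL-Library.Extended_Real"
          "HOL-Algebra.Group_Action" "HOL-Algebra.Generated_Groups"
begin

definition word_prod :: "('a, 'b) monoid_scheme \<Rightarrow> 'a list \<Rightarrow> 'a" where
  "word_prod G ws = foldr (\<lambda>a b. a \<otimes>\<^bsub>G\<^esub> b) ws \<one>\<^bsub>G\<^esub>"

definition word_length :: "('a, 'b) monoid_scheme \<Rightarrow> 'a set \<Rightarrow> 'a \<Rightarrow> nat" where
  "word_length G S x = (LEAST k. \<exists>ws. length ws = k \<and>
      set ws \<subseteq> S \<union> (\<lambda>s. inv\<^bsub>G\<^esub> s) ` S \<and> word_prod G ws = x)"

definition word_dist :: "('a, 'b) monoid_scheme \<Rightarrow> 'a set \<Rightarrow> 'a \<Rightarrow> 'a \<Rightarrow> real" where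
  "word_dist G S g h = real (word_length G S (inv\<^bsub>G\<^esub> g \<otimes>\<^bsub>G\<^esub> h))"

text \<open>Distance between sets: d(A,B) = inf of d(x,y), valued in ereal (inf of empty = \<infinity>).\<close>
definition set_dist :: "('a \<Rightarrow> 'a \<Rightarrow> real) \<Rightarrow> 'a set \<Rightarrow> 'a set \<Rightarrow> ereal" where
  "set_dist d A B = Inf {ereal (d x y) | x y. x \<in> A \<and> y \<in> B}"

definition unif_bounded :: "('a \<Rightarrow> 'a \<Rightarrow> real) \<Rightarrow> 'a set set \<Rightarrow> bool" where
  "unif_bounded d \<F> \<longleftrightarrow> (\<exists>R>0. \<forall>F\<in>\<F>. \<forall>x\<in>F. \<forall>y\<in>F. d x y < R)"

definition r_disjoint :: "('a \<Rightarrow> 'a \<Rightarrow> real) \<Rightarrow> real \<Rightarrow> 'a set set \<Rightarrow> bool" where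
  "r_disjoint d r \<F> \<longleftrightarrow>
     (\<forall>F1\<in>\<F>. \<forall>F2\<in>\<F>. F1 \<noteq> F2 \<longrightarrow> set_dist d F1 F2 > ereal r)"

definition asdim_le :: "('a \<Rightarrow> 'a \<Rightarrow> real) \<Rightarrow> 'a set \<Rightarrow> nat \<Rightarrow> bool" where
  "asdim_le d X n \<longleftrightarrow>
     (\<forall>r>0. \<exists>\<F> :: nat \<Rightarrow> 'a set set.
        (\<forall>i\<le>n. unif_bounded d (\<F> i) \<and> r_disjoint d r (\<F> i) \<and> (\<forall>F\<in>\<F> i. F \<subseteq> X))
        \<and> X \<subseteq> (\<Union>i\<le>n. \<Union>(\<F> i)))"

definition asymptotic_property_C :: "('a \<Rightarrow> 'a \<Rightarrow> real) \<Rightarrow> 'a set \<Rightarrow> bool" where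
  "asymptotic_property_C d X \<longleftrightarrow>
     (\<forall>r :: nat \<Rightarrow> real. 0 < r 0 \<and> strict_mono r \<longrightarrow>
        (\<exists>m. \<exists>\<F> :: nat \<Rightarrow> 'a set set.
           (\<forall>i\<le>m. unif_bounded d (\<F> i) \<and> r_disjoint d (r i) (\<F> i) \<and> (\<forall>F\<in>\<F> i. F \<subseteq> X))
           \<and> X \<subseteq> (\<Union>i\<le>m. \<Union>(\<F> i))))"

definition r_decomposable ::
    "('a \<Rightarrow> 'a \<Rightarrow> real) \<Rightarrow> real \<Rightarrow> 'a set set \<Rightarrow> 'a set set \<Rightarrow> bool" where
  "r_decomposable d r \<X> \<Y> \<longleftrightarrow>
     (\<forall>X\<in>\<X>. \<exists>\<U> \<V>. r_disjoint d r \<U> \<and> r_disjoint d r \<V> \<and>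
        (\<forall>F\<in>\<U> \<union> \<V>. F \<subseteq> X) \<and> X \<subseteq> \<Union>(\<U> \<union> \<V>) \<and> \<U> \<union> \<V> \<subseteq> \<Y>)"

text \<open>Straight finite decomposition complexity of a metric family (r indexed from 1; r 0 unused).\<close>
definition sFDC_family :: "('a \<Rightarrow> 'a \<Rightarrow> real) \<Rightarrow> 'a set set \<Rightarrow> bool" where
  "sFDC_family d \<X> \<longleftrightarrow>
     (\<forall>r :: nat \<Rightarrow> real. 0 \<le> r 1 \<and> (\<forall>i\<ge>1. r i \<le> r (Suc i)) \<longrightarrow>
        (\<exists>n. \<exists>\<XX> :: nat \<Rightarrow> 'a set set. \<XX> 0 = \<X> \<and>
           (\<forall>i\<in>{1..n}. r_decomposable d (r i) (\<XX> (i - 1)) (\<XX> i)) \<and>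
           unif_bounded d (\<XX> n)))"

definition sFDC :: "('a \<Rightarrow> 'a \<Rightarrow> real) \<Rightarrow> 'a set \<Rightarrow> bool" where
  "sFDC d X \<longleftrightarrow> sFDC_family d {X}"

definition quasi_stabilizer ::
    "('a, 'c) monoid_scheme \<Rightarrow> ('a \<Rightarrow> 'b \<Rightarrow> 'b) \<Rightarrow> ('b \<Rightarrow> 'b \<Rightarrow> real) \<Rightarrow> real \<Rightarrow> 'b \<Rightarrow> 'a set" where
  "quasi_stabilizer G \<phi> dM R x = {g \<in> carrier G. dM x (\<phi> g x) \<le> R}"

end

theory Submission
  imports Defs
begin

text \<open>The orbit map \<open>g \<mapsto> g x0\<close> is Lipschitz for the word metric, so families in \<open>M\<close> that
  are disjoint at a large enough scale pull back to families in \<open>G\<close> disjoint at a prescribed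
  scale. A set of diameter \<open>< D\<close> in \<open>M\<close> pulls back into a single translate \<open>a W\<^sub>D(x0)\<close>, and
  left translations are isometries of \<open>d\<^sub>S\<close>; so translating a cover of \<open>W\<^sub>D(x0)\<close> by \<open>n + 1\<close>
  disjoint uniformly bounded families covers that preimage. Doing this for every family of a
  property C cover of \<open>M\<close>, with scales chosen block by block, gives \<open>G\<close> asymptotic property C,
  which in turn implies straight finite decomposition complexity.\<close>

lemma set_dist_le: "x \<in> A \<Longrightarrow> y \<in> B \<Longrightarrow> set_dist d A B \<le> ereal (d x y)"
  unfolding set_dist_def by (intro Inf_lower) blast

lemma set_dist_greatest:
  assumes "\<And>x y. x \<in> A \<Longrightarrow> y \<in> B \<Longrightarrow> e \<le> ereal (d x y)"
  shows "e \<le> set_dist d A B"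
  unfolding set_dist_def using assms by (intro Inf_greatest) auto

lemma set_dist_antimono:
  assumes "A \<subseteq> A'" "B \<subseteq> B'"
  shows "set_dist d A' B' \<le> set_dist d A B"
  unfolding set_dist_def using assms by (intro Inf_superset_mono) blast

lemma r_disjoint_singleton: "r_disjoint d r {A}"
  unfolding r_disjoint_def by auto

lemma r_disjoint_empty: "r_disjoint d r {}"
  unfolding r_disjoint_def by auto

lemma r_disjoint_mono:
  assumes "r \<le> r'" "r_disjoint d r' \<F>"
  shows "r_disjoint d r \<F>"
proof -
  have "ereal r \<le> ereal r'" using assms(1) by simp
  then show ?thesis using assms(2) unfolding r_disjoint_def by (blast intro: le_less_trans)
qed

lemma r_disjoint_Int:
  assumes "r_disjoint d r \<F>"
  shows "r_disjoint d r {A \<inter> Y | A. A \<in> \<F>}"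
  unfolding r_disjoint_def
proof (intro ballI impI)
  fix F1 F2 assume "F1 \<in> {A \<inter> Y | A. A \<in> \<F>}" "F2 \<in> {A \<inter> Y | A. A \<in> \<F>}" "F1 \<noteq> F2"
  then obtain A B where AB: "A \<in> \<F>" "B \<in> \<F>" "A \<noteq> B" "F1 = A \<inter> Y" "F2 = B \<inter> Y" by blast
  have "ereal r < set_dist d A B" using assms AB unfolding r_disjoint_def by blast
  also have "\<dots> \<le> set_dist d F1 F2" using AB by (intro set_dist_antimono) auto
  finally show "ereal r < set_dist d F1 F2" .
qed

lemma unif_bounded_empty: "unif_bounded d {}"
  unfolding unif_bounded_def by (auto intro: exI[of _ 1])

lemma unif_bounded_Un:
  assumes "unif_bounded d \<F>" "unif_bounded d \<G>"
  shows "unif_bounded d (\<F> \<union> \<G>)"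
proof -
  obtain R1 R2 where "R1 > 0" "\<forall>F\<in>\<F>. \<forall>x\<in>F. \<forall>y\<in>F. d x y < R1"
    "R2 > 0" "\<forall>F\<in>\<G>. \<forall>x\<in>F. \<forall>y\<in>F. d x y < R2"
    using assms unfolding unif_bounded_def by blast
  then show ?thesis
    unfolding unif_bounded_def by (intro exI[of _ "max R1 R2"]) (auto simp: less_max_iff_disj)
qed

lemma unif_bounded_UN:
  "finite I \<Longrightarrow> (\<And>i. i \<in> I \<Longrightarrow> unif_bounded d (\<F> i)) \<Longrightarrow> unif_bounded d (\<Union>i\<in>I. \<F> i)"
  by (induction I rule: finite_induct) (auto intro: unif_bounded_Un simp: unif_bounded_empty)

lemma unif_bounded_insert_empty: "unif_bounded d \<F> \<Longrightarrow> unif_bounded d (insert {} \<F>)"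
  unfolding unif_bounded_def by auto

lemma unif_bounded_subsets:
  assumes "unif_bounded d \<F>" "\<And>G. G \<in> \<G> \<Longrightarrow> \<exists>F\<in>\<F>. G \<subseteq> F"
  shows "unif_bounded d \<G>"
  using assms unfolding unif_bounded_def by (metis subsetD)

section \<open>Asymptotic property C implies straight finite decomposition complexity\<close>

definition peel_rest :: "'a set \<Rightarrow> (nat \<Rightarrow> 'a set set) \<Rightarrow> nat \<Rightarrow> 'a set" where
  "peel_rest X \<C> t = X - (\<Union>s<t. \<Union>(\<C> s))"

definition peel_family :: "'a set \<Rightarrow> (nat \<Rightarrow> 'a set set) \<Rightarrow> nat \<Rightarrow> 'a set set" where
  "peel_family X \<C> t =
     insert (peel_rest X \<C> t) {A \<inter> peel_rest X \<C> s | A s. s < t \<and> A \<in> \<C> s}"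

lemma peel_family_0: "peel_family X \<C> 0 = {X}"
  unfolding peel_family_def peel_rest_def by auto

lemma peel_rest_Suc: "peel_rest X \<C> (Suc t) = peel_rest X \<C> t - \<Union>(\<C> t)"
  unfolding peel_rest_def by (auto simp: lessThan_Suc)

lemma r_decomposable_peel_family_Suc:
  assumes "r_disjoint d r (\<C> t)"
  shows "r_decomposable d r (peel_family X \<C> t) (peel_family X \<C> (Suc t))"
  unfolding r_decomposable_def
proof
  fix Y assume Y: "Y \<in> peel_family X \<C> t"
  show "\<exists>\<U> \<V>. r_disjoint d r \<U> \<and> r_disjoint d r \<V> \<and> (\<forall>F\<in>\<U> \<union> \<V>. F \<subseteq> Y) \<and>
      Y \<subseteq> \<Union>(\<U> \<union> \<V>) \<and> \<U> \<union> \<V> \<subseteq> peel_family X \<C> (Suc t)"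
  proof (cases "Y = peel_rest X \<C> t")
    case True
    show ?thesis
    proof (intro exI conjI)
      show "r_disjoint d r {A \<inter> peel_rest X \<C> t | A. A \<in> \<C> t}"
        using assms by (rule r_disjoint_Int)
      show "r_disjoint d r {peel_rest X \<C> (Suc t)}" by (rule r_disjoint_singleton)
    qed (use True in \<open>auto simp: peel_family_def peel_rest_Suc\<close>)
  next
    case False
    then obtain A s where "Y = A \<inter> peel_rest X \<C> s" "s < t" "A \<in> \<C> s"
      using Y unfolding peel_family_def by auto
    then show ?thesis
      by (intro exI[of _ "{Y}"] exI[of _ "{}"])
        (auto simp: r_disjoint_singleton r_disjoint_empty peel_family_def)
  qed
qed

lemma unif_bounded_peel_family:
  assumes "\<And>t. t < N \<Longrightarrow> unif_bounded d (\<C> t)" and "X \<subseteq> (\<Union>t<N. \<Union>(\<C> t))"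
  shows "unif_bounded d (peel_family X \<C> N)"
proof (rule unif_bounded_subsets)
  show "unif_bounded d (insert {} (\<Union>t<N. \<C> t))"
    using assms(1) by (intro unif_bounded_insert_empty unif_bounded_UN) auto
  have "peel_rest X \<C> N = {}" using assms(2) unfolding peel_rest_def by auto
  then show "\<exists>F\<in>insert {} (\<Union>t<N. \<C> t). G \<subseteq> F" if "G \<in> peel_family X \<C> N" for G
    using that unfolding peel_family_def by auto
qed

text \<open>Removing the families of a finite cover one at a time, each removed family being
  disjoint at the next scale, is a straight decomposition sequence.\<close>

theorem sFDC_if_asymptotic_property_C:
  assumes "asymptotic_property_C d X"
  shows "sFDC d X"
  unfolding sFDC_def sFDC_family_def
proof (intro allI impI)
  fix r :: "nat \<Rightarrow> real" assume r: "0 \<le> r 1 \<and> (\<forall>i\<ge>1. r i \<le> r (Suc i))"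
  define r' where "r' i = r (Suc i) + real i + 1" for i
  have r'_mono: "strict_mono r'"
  proof (rule strict_mono_Suc_iff[THEN iffD2], intro allI)
    fix i
    have "r (Suc i) \<le> r (Suc (Suc i))" using r by simp
    then show "r' i < r' (Suc i)" by (simp add: r'_def)
  qed
  have r'_pos: "0 < r' 0" using r by (simp add: r'_def)
  obtain m \<C> where \<C>: "\<forall>i\<le>m. unif_bounded d (\<C> i) \<and> r_disjoint d (r' i) (\<C> i) \<and> (\<forall>F\<in>\<C> i. F \<subseteq> X)"
    and cover: "X \<subseteq> (\<Union>i\<le>m. \<Union>(\<C> i))"
    using assms[unfolded asymptotic_property_C_def, rule_format, OF conjI[OF r'_pos r'_mono]] by blast
  have "r_decomposable d (r i) (peel_family X \<C> (i - 1)) (peel_family X \<C> i)"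
    if i: "i \<in> {1..Suc m}" for i
  proof -
    obtain t where t: "i = Suc t" "t \<le> m" using i by (cases i) auto
    have "r (Suc t) \<le> r' t" by (simp add: r'_def)
    moreover have "r_disjoint d (r' t) (\<C> t)" using \<C> t(2) by blast
    ultimately have "r_disjoint d (r (Suc t)) (\<C> t)" by (rule r_disjoint_mono)
    then show ?thesis using t by (simp add: r_decomposable_peel_family_Suc)
  qed
  moreover have "unif_bounded d (peel_family X \<C> (Suc m))"
  proof (rule unif_bounded_peel_family)
    show "unif_bounded d (\<C> t)" if "t < Suc m" for t using \<C> that by simp
    show "X \<subseteq> (\<Union>t<Suc m. \<Union>(\<C> t))" using cover by (simp add: lessThan_Suc_atMost)
  qed
  ultimately show "\<exists>n \<XX>. \<XX> 0 = {X} \<and> (\<forall>i\<in>{1..n}. r_decomposable d (r i) (\<XX> (i - 1)) (\<XX> i)) \<and>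
      unif_bounded d (\<XX> n)"
    using peel_family_0 by (intro exI[of _ "Suc m"] exI[of _ "peel_family X \<C>"]) simp
qed

lemma block_index:
  fixes b :: nat
  assumes "k < b"
  shows "(j * b + k) div b = j" "(j * b + k) mod b = k"
  using assms by (simp_all add: add.commute[of "j * b"])

lemma asymptotic_property_C_flatten:
  assumes fam: "\<And>j k. j \<le> m \<Longrightarrow> k \<le> n \<Longrightarrow>
      unif_bounded d (\<C> j k) \<and> r_disjoint d (\<rho> j) (\<C> j k) \<and> (\<forall>Q\<in>\<C> j k. Q \<subseteq> X)"
    and cover: "X \<subseteq> (\<Union>j\<le>m. \<Union>k\<le>n. \<Union>(\<C> j k))"
    and scale: "\<And>j k. j \<le> m \<Longrightarrow> k \<le> n \<Longrightarrow> r (j * Suc n + k) \<le> \<rho> j"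
  shows "\<exists>m' \<F>. (\<forall>i\<le>m'. unif_bounded d (\<F> i) \<and> r_disjoint d (r i) (\<F> i) \<and> (\<forall>F\<in>\<F> i. F \<subseteq> X))
           \<and> X \<subseteq> (\<Union>i\<le>m'. \<Union>(\<F> i))"
proof -
  let ?\<F> = "\<lambda>i. \<C> (i div Suc n) (i mod Suc n)"
  have "unif_bounded d (?\<F> i) \<and> r_disjoint d (r i) (?\<F> i) \<and> (\<forall>F\<in>?\<F> i. F \<subseteq> X)"
    if i: "i \<le> m * Suc n + n" for i
  proof -
    define j k where "j = i div Suc n" and "k = i mod Suc n"
    have jk: "i = j * Suc n + k" "k \<le> n"
      by (simp only: j_def k_def div_mult_mod_eq) (simp add: k_def less_Suc_eq_le)
    have "j < Suc m" unfolding j_def using i by (intro less_mult_imp_div_less) simp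
    then have "j \<le> m" by simp
    moreover have "r i \<le> \<rho> j" using scale[OF \<open>j \<le> m\<close> jk(2), folded jk(1)] .
    ultimately show ?thesis
      using fam[of j k] jk(2) r_disjoint_mono[of "r i" "\<rho> j"] unfolding j_def k_def by blast
  qed
  moreover have "X \<subseteq> (\<Union>i\<le>m * Suc n + n. \<Union>(?\<F> i))"
  proof
    fix x assume "x \<in> X"
    then obtain j k where jk: "j \<le> m" "k \<le> n" "x \<in> \<Union>(\<C> j k)" using cover by blast
    have "j * Suc n + k \<le> m * Suc n + n" using jk(1,2) by (intro add_mono mult_le_mono1)
    moreover have "?\<F> (j * Suc n + k) = \<C> j k" using jk(2) by (simp only: block_index le_imp_less_Suc)
    ultimately show "x \<in> (\<Union>i\<le>m * Suc n + n. \<Union>(?\<F> i))" using jk(3) by (intro UN_I) auto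
  qed
  ultimately show ?thesis by (intro exI[of _ "m * Suc n + n"] exI[of _ ?\<F>] conjI) simp_all
qed

lemma strict_mono_pos: "strict_mono (r :: nat \<Rightarrow> real) \<Longrightarrow> 0 < r 0 \<Longrightarrow> 0 < r i"
  by (metis le0 order_less_le_trans strict_mono_less_eq)

lemma word_prod_Nil [simp]: "word_prod G [] = \<one>\<^bsub>G\<^esub>"
  by (simp add: word_prod_def)

lemma word_prod_Cons [simp]: "word_prod G (a # ws) = a \<otimes>\<^bsub>G\<^esub> word_prod G ws"
  by (simp add: word_prod_def)

context group
begin

lemma word_prod_closed: "set ws \<subseteq> carrier G \<Longrightarrow> word_prod G ws \<in> carrier G"
  by (induction ws) auto

lemma word_prod_append:
  "set ws \<subseteq> carrier G \<Longrightarrow> set vs \<subseteq> carrier G \<Longrightarrow>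
    word_prod G (ws @ vs) = word_prod G ws \<otimes> word_prod G vs"
  by (induction ws) (auto simp: word_prod_closed m_assoc)

lemma generate_word_prod:
  assumes "S \<subseteq> carrier G" "x \<in> generate G S"
  shows "\<exists>ws. set ws \<subseteq> S \<union> (\<lambda>s. inv s) ` S \<and> word_prod G ws = x"
  using assms(2)
proof (induction rule: generate.induct)
  case one
  show ?case by (intro exI[of _ "[]"]) simp
next
  case (incl h)
  then show ?case using assms(1) by (intro exI[of _ "[h]"]) auto
next
  case (inv h)
  then show ?case using assms(1) by (intro exI[of _ "[inv h]"]) auto
next
  case (eng h1 h2)
  then obtain ws vs where "set ws \<subseteq> S \<union> (\<lambda>s. inv s) ` S" "word_prod G ws = h1"
    "set vs \<subseteq> S \<union> (\<lambda>s. inv s) ` S" "word_prod G vs = h2" by blast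
  moreover have "S \<union> (\<lambda>s. inv s) ` S \<subseteq> carrier G" using assms(1) by auto
  ultimately show ?case
    by (intro exI[of _ "ws @ vs"]) (simp add: word_prod_append[of ws vs] subset_trans)
qed

lemma word_length_witness:
  assumes "S \<subseteq> carrier G" "generate G S = carrier G" "x \<in> carrier G"
  shows "\<exists>ws. length ws = word_length G S x \<and> set ws \<subseteq> S \<union> (\<lambda>s. inv s) ` S \<and> word_prod G ws = x"
proof -
  have "\<exists>k ws. length ws = k \<and> set ws \<subseteq> S \<union> (\<lambda>s. inv s) ` S \<and> word_prod G ws = x"
    using generate_word_prod assms by blast
  then show ?thesis unfolding word_length_def by (rule LeastI_ex)
qed

lemma word_dist_mult_left:
  assumes "g \<in> carrier G" "a \<in> carrier G" "b \<in> carrier G"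
  shows "word_dist G S (g \<otimes> a) (g \<otimes> b) = word_dist G S a b"
proof -
  have "inv (g \<otimes> a) \<otimes> (g \<otimes> b) = inv a \<otimes> b"
    using assms by (simp add: inv_mult_group m_assoc[symmetric]) (simp add: m_assoc)
  then show ?thesis by (simp add: word_dist_def)
qed

end

section \<open>Groups acting isometrically on a space with property C\<close>

locale isometric_action = group G + group_action G M \<phi> + M: Metric_space M dM
  for G (structure) and M :: "'b set" and \<phi> and dM +
  fixes S :: "'a set" and x0 :: 'b
  assumes finite_gens: "finite S"
    and gens_carrier: "S \<subseteq> carrier G"
    and generate_gens: "generate G S = carrier G"
    and isometric: "\<And>g x y. g \<in> carrier G \<Longrightarrow> x \<in> M \<Longrightarrow> y \<in> M \<Longrightarrow> dM (\<phi> g x) (\<phi> g y) = dM x y"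
    and basepoint: "x0 \<in> M"
begin

abbreviation dG :: "'a \<Rightarrow> 'a \<Rightarrow> real" where
  "dG \<equiv> word_dist G S"

lemma act_closed: "g \<in> carrier G \<Longrightarrow> x \<in> M \<Longrightarrow> \<phi> g x \<in> M"
  using element_image by blast

lemma act_one: "x \<in> M \<Longrightarrow> \<phi> \<one> x = x"
  using id_eq_one by (metis restrict_apply')

lemma dist_orbit_eq:
  assumes "g \<in> carrier G" "h \<in> carrier G"
  shows "dM (\<phi> g x0) (\<phi> h x0) = dM x0 (\<phi> (inv g \<otimes> h) x0)"
proof -
  have "\<phi> h x0 = \<phi> g (\<phi> (inv g \<otimes> h) x0)"
    using assms basepoint by (simp add: composition_rule[symmetric] m_assoc[symmetric])
  then show ?thesis
    using assms basepoint by (simp add: isometric act_closed)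
qed

lemma dist_orbit_inv: "g \<in> carrier G \<Longrightarrow> dM x0 (\<phi> (inv g) x0) = dM x0 (\<phi> g x0)"
  using dist_orbit_eq[of g \<one>] basepoint by (simp add: act_one M.commute)

lemma dist_orbit_word_prod:
  assumes "set ws \<subseteq> S \<union> (\<lambda>s. inv s) ` S"
  shows "dM x0 (\<phi> (word_prod G ws) x0) \<le> (\<Sum>s\<in>S. dM x0 (\<phi> s x0)) * length ws"
  using assms
proof (induction ws)
  case Nil
  then show ?case using basepoint by (simp add: act_one)
next
  case (Cons a ws)
  have a: "a \<in> carrier G" and w: "word_prod G ws \<in> carrier G"
    using Cons.prems gens_carrier by (auto intro!: word_prod_closed)
  have "dM x0 (\<phi> a x0) \<le> (\<Sum>s\<in>S. dM x0 (\<phi> s x0))"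
  proof -
    obtain s where "s \<in> S" "dM x0 (\<phi> a x0) = dM x0 (\<phi> s x0)"
      using Cons.prems gens_carrier dist_orbit_inv by auto
    then show ?thesis using finite_gens by (auto intro!: member_le_sum)
  qed
  moreover have "dM x0 (\<phi> (word_prod G (a # ws)) x0) \<le> dM x0 (\<phi> a x0) + dM x0 (\<phi> (word_prod G ws) x0)"
  proof -
    have "dM x0 (\<phi> (a \<otimes> word_prod G ws) x0)
        \<le> dM x0 (\<phi> a x0) + dM (\<phi> a x0) (\<phi> (a \<otimes> word_prod G ws) x0)"
      using a w basepoint by (intro M.triangle) (auto simp: act_closed)
    also have "dM (\<phi> a x0) (\<phi> (a \<otimes> word_prod G ws) x0) = dM x0 (\<phi> (word_prod G ws) x0)"
      using a w by (simp add: dist_orbit_eq m_assoc[symmetric])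
    finally show ?thesis by simp
  qed
  ultimately show ?case using Cons by (simp add: algebra_simps)
qed

lemma orbit_map_lipschitz:
  "\<exists>L>0. \<forall>g\<in>carrier G. \<forall>h\<in>carrier G. dM (\<phi> g x0) (\<phi> h x0) \<le> L * dG g h"
proof (intro exI conjI ballI)
  let ?L = "(\<Sum>s\<in>S. dM x0 (\<phi> s x0)) + 1"
  show "?L > 0" by (simp add: add_nonneg_pos sum_nonneg)
  fix g h assume gh: "g \<in> carrier G" "h \<in> carrier G"
  obtain ws where ws: "length ws = word_length G S (inv g \<otimes> h)"
    "set ws \<subseteq> S \<union> (\<lambda>s. inv s) ` S" "word_prod G ws = inv g \<otimes> h"
    using word_length_witness gens_carrier generate_gens gh by blast
  have "dM (\<phi> g x0) (\<phi> h x0) \<le> (\<Sum>s\<in>S. dM x0 (\<phi> s x0)) * dG g h"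
    using dist_orbit_word_prod[OF ws(2)] ws gh by (simp add: dist_orbit_eq word_dist_def)
  also have "\<dots> \<le> ?L * dG g h" by (intro mult_right_mono) (simp_all add: word_dist_def)
  finally show "dM (\<phi> g x0) (\<phi> h x0) \<le> ?L * dG g h" .
qed


definition orbit_preimage :: "'b set \<Rightarrow> 'a set" where
  "orbit_preimage A = {g \<in> carrier G. \<phi> g x0 \<in> A}"

definition orbit_rep :: "'b set \<Rightarrow> 'a" where
  "orbit_rep A = (SOME g. g \<in> orbit_preimage A)"

definition orbit_pieces :: "'b set set \<Rightarrow> 'a set set \<Rightarrow> 'a set set" where
  "orbit_pieces \<F> \<E> = {(orbit_rep A <# B) \<inter> orbit_preimage A | A B. A \<in> \<F> \<and> B \<in> \<E>}"

lemma orbit_rep_in: "g \<in> orbit_preimage A \<Longrightarrow> orbit_rep A \<in> orbit_preimage A"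
  unfolding orbit_rep_def by (rule someI)

lemma mem_orbit_piece:
  assumes "x \<in> (orbit_rep A <# B) \<inter> orbit_preimage A"
  obtains b where "b \<in> B" "x = orbit_rep A \<otimes> b" "orbit_rep A \<in> carrier G"
proof -
  have "orbit_rep A \<in> carrier G"
    using assms orbit_rep_in[of x A] by (simp add: orbit_preimage_def)
  then show ?thesis using assms that unfolding l_coset_def by blast
qed

lemma orbit_pieces_subset_carrier: "Q \<in> orbit_pieces \<F> \<E> \<Longrightarrow> Q \<subseteq> carrier G"
  unfolding orbit_pieces_def orbit_preimage_def by auto

lemma unif_bounded_orbit_pieces:
  assumes "unif_bounded dG \<E>" "\<And>B. B \<in> \<E> \<Longrightarrow> B \<subseteq> carrier G"
  shows "unif_bounded dG (orbit_pieces \<F> \<E>)"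
proof -
  obtain R where R: "R > 0" "\<forall>B\<in>\<E>. \<forall>x\<in>B. \<forall>y\<in>B. dG x y < R"
    using assms(1) unfolding unif_bounded_def by blast
  have "dG x y < R" if Q: "Q \<in> orbit_pieces \<F> \<E>" "x \<in> Q" "y \<in> Q" for Q x y
  proof -
    obtain A B where AB: "B \<in> \<E>" "Q = (orbit_rep A <# B) \<inter> orbit_preimage A"
      using Q(1) unfolding orbit_pieces_def by blast
    obtain b1 where b1: "b1 \<in> B" "x = orbit_rep A \<otimes> b1" "orbit_rep A \<in> carrier G"
      using Q(2) unfolding AB(2) by (rule mem_orbit_piece)
    obtain b2 where b2: "b2 \<in> B" "y = orbit_rep A \<otimes> b2"
      using Q(3) unfolding AB(2) by (rule mem_orbit_piece)
    have "b1 \<in> carrier G" "b2 \<in> carrier G" using b1(1) b2(1) AB(1) assms(2) by auto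
    then have "dG x y = dG b1 b2" using b1 b2 by (simp add: word_dist_mult_left)
    then show ?thesis using R b1 b2 AB(1) by auto
  qed
  then show ?thesis using R(1) unfolding unif_bounded_def by blast
qed

lemma r_disjoint_orbit_pieces:
  assumes lip: "\<forall>g\<in>carrier G. \<forall>h\<in>carrier G. dM (\<phi> g x0) (\<phi> h x0) \<le> L * dG g h" "L > 0"
    and \<F>: "r_disjoint dM (L * c) \<F>"
    and \<E>: "r_disjoint dG c \<E>" "\<And>B. B \<in> \<E> \<Longrightarrow> B \<subseteq> carrier G"
    and "r < c"
  shows "r_disjoint dG r (orbit_pieces \<F> \<E>)"
proof -
  have "ereal c \<le> set_dist dG Q1 Q2"
    if Q: "Q1 \<in> orbit_pieces \<F> \<E>" "Q2 \<in> orbit_pieces \<F> \<E>" "Q1 \<noteq> Q2" for Q1 Q2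
  proof -
    obtain A1 B1 A2 B2 where AB: "A1 \<in> \<F>" "B1 \<in> \<E>" "Q1 = (orbit_rep A1 <# B1) \<inter> orbit_preimage A1"
      "A2 \<in> \<F>" "B2 \<in> \<E>" "Q2 = (orbit_rep A2 <# B2) \<inter> orbit_preimage A2"
      using Q(1,2) unfolding orbit_pieces_def by blast
    show ?thesis
    proof (cases "A1 = A2")
      case True
      then have "B1 \<noteq> B2" using Q(3) AB by auto
      then have "ereal c < set_dist dG B1 B2" using \<E>(1) AB unfolding r_disjoint_def by blast
      also have "set_dist dG B1 B2 \<le> set_dist dG Q1 Q2"
      proof (rule set_dist_greatest)
        fix x y assume xy: "x \<in> Q1" "y \<in> Q2"
        obtain b1 where b1: "b1 \<in> B1" "x = orbit_rep A1 \<otimes> b1" "orbit_rep A1 \<in> carrier G"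
          using xy(1) unfolding AB(3) by (rule mem_orbit_piece)
        obtain b2 where b2: "b2 \<in> B2" "y = orbit_rep A1 \<otimes> b2"
          using xy(2) unfolding AB(6) True[symmetric] by (rule mem_orbit_piece)
        have "b1 \<in> carrier G" "b2 \<in> carrier G" using b1(1) b2(1) AB \<E>(2) by auto
        then have "dG x y = dG b1 b2" using b1 b2 by (simp add: word_dist_mult_left)
        then show "set_dist dG B1 B2 \<le> ereal (dG x y)"
          using b1(1) b2(1) by (simp add: set_dist_le)
      qed
      finally show ?thesis by simp
    next
      case False
      show ?thesis
      proof (rule set_dist_greatest)
        fix x y assume "x \<in> Q1" "y \<in> Q2"
        then have x: "x \<in> carrier G" "\<phi> x x0 \<in> A1" and y: "y \<in> carrier G" "\<phi> y x0 \<in> A2"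
          using AB by (auto simp: orbit_preimage_def)
        have "ereal (L * c) < set_dist dM A1 A2" using \<F> AB False unfolding r_disjoint_def by blast
        also have "\<dots> \<le> ereal (dM (\<phi> x x0) (\<phi> y x0))" using x(2) y(2) by (rule set_dist_le)
        finally have "L * c < dM (\<phi> x x0) (\<phi> y x0)" by simp
        also have "\<dots> \<le> L * dG x y" using lip(1) x(1) y(1) by blast
        finally have "L * c < L * dG x y" .
        then show "ereal c \<le> ereal (dG x y)" using lip(2) by simp
      qed
    qed
  qed
  moreover have "ereal r < ereal c" using \<open>r < c\<close> by simp
  ultimately show ?thesis unfolding r_disjoint_def by (blast intro: less_le_trans)
qed

lemma orbit_preimage_subset_orbit_pieces:
  assumes diam: "\<forall>A\<in>\<F>. \<forall>x\<in>A. \<forall>y\<in>A. dM x y < D"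
    and cover: "quasi_stabilizer G \<phi> dM D x0 \<subseteq> (\<Union>k\<le>n. \<Union>(\<E> k))"
  shows "orbit_preimage (\<Union>\<F>) \<subseteq> (\<Union>k\<le>n. \<Union>(orbit_pieces \<F> (\<E> k)))"
proof
  fix g assume "g \<in> orbit_preimage (\<Union>\<F>)"
  then obtain A where A: "A \<in> \<F>" "g \<in> orbit_preimage A" unfolding orbit_preimage_def by blast
  define a where "a = orbit_rep A"
  have a: "a \<in> carrier G" "\<phi> a x0 \<in> A" using orbit_rep_in[OF A(2)] by (auto simp: a_def orbit_preimage_def)
  have g: "g \<in> carrier G" "\<phi> g x0 \<in> A" using A(2) by (auto simp: orbit_preimage_def)
  have "dM x0 (\<phi> (inv a \<otimes> g) x0) < D"
    using diam A(1) a g by (simp add: dist_orbit_eq[symmetric])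
  then have "inv a \<otimes> g \<in> quasi_stabilizer G \<phi> dM D x0"
    using a g by (simp add: quasi_stabilizer_def)
  then obtain k B where kB: "k \<le> n" "B \<in> \<E> k" "inv a \<otimes> g \<in> B" using cover by blast
  have "g = a \<otimes> (inv a \<otimes> g)" using a g by (simp add: m_assoc[symmetric])
  then have "g \<in> a <# B" using kB(3) unfolding l_coset_def by blast
  then have "g \<in> (orbit_rep A <# B) \<inter> orbit_preimage A" using A(2) by (simp add: a_def)
  then show "g \<in> (\<Union>k\<le>n. \<Union>(orbit_pieces \<F> (\<E> k)))"
    using A(1) kB(1,2) unfolding orbit_pieces_def by blast
qed

lemma quasi_stabilizer_subset_carrier: "quasi_stabilizer G \<phi> dM R x0 \<subseteq> carrier G"
  unfolding quasi_stabilizer_def by blast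

lemma orbit_preimage_refinement:
  assumes asdim: "\<forall>R>0. asdim_le dG (quasi_stabilizer G \<phi> dM R x0) n"
    and lip: "\<forall>g\<in>carrier G. \<forall>h\<in>carrier G. dM (\<phi> g x0) (\<phi> h x0) \<le> L * dG g h" "L > 0"
    and \<F>: "unif_bounded dM \<F>" "r_disjoint dM (L * c) \<F>"
    and "0 < c" "\<rho> < c"
  shows "\<exists>\<C>. (\<forall>k\<le>n. unif_bounded dG (\<C> k) \<and> r_disjoint dG \<rho> (\<C> k) \<and> (\<forall>Q\<in>\<C> k. Q \<subseteq> carrier G))
           \<and> orbit_preimage (\<Union>\<F>) \<subseteq> (\<Union>k\<le>n. \<Union>(\<C> k))"
proof -
  obtain D where "D > 0" and diam: "\<forall>A\<in>\<F>. \<forall>x\<in>A. \<forall>y\<in>A. dM x y < D"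
    using \<F>(1) unfolding unif_bounded_def by blast
  let ?W = "quasi_stabilizer G \<phi> dM D x0"
  obtain \<E> where \<E>: "\<forall>k\<le>n. unif_bounded dG (\<E> k) \<and> r_disjoint dG c (\<E> k) \<and> (\<forall>B\<in>\<E> k. B \<subseteq> ?W)"
    and cover: "?W \<subseteq> (\<Union>k\<le>n. \<Union>(\<E> k))"
    using asdim \<open>D > 0\<close> \<open>0 < c\<close> unfolding asdim_le_def by meson
  have "unif_bounded dG (orbit_pieces \<F> (\<E> k)) \<and> r_disjoint dG \<rho> (orbit_pieces \<F> (\<E> k)) \<and>
      (\<forall>Q\<in>orbit_pieces \<F> (\<E> k). Q \<subseteq> carrier G)" if "k \<le> n" for k
  proof -
    have \<E>k: "unif_bounded dG (\<E> k)" "r_disjoint dG c (\<E> k)" "\<forall>B\<in>\<E> k. B \<subseteq> ?W"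
      using \<E> that by auto
    then have sub: "B \<subseteq> carrier G" if "B \<in> \<E> k" for B
      using that quasi_stabilizer_subset_carrier by blast
    show ?thesis
      using unif_bounded_orbit_pieces[OF \<E>k(1) sub] r_disjoint_orbit_pieces[OF lip \<F>(2) \<E>k(2) sub]
        orbit_pieces_subset_carrier \<open>\<rho> < c\<close> by blast
  qed
  moreover have "orbit_preimage (\<Union>\<F>) \<subseteq> (\<Union>k\<le>n. \<Union>(orbit_pieces \<F> (\<E> k)))"
    using diam cover by (rule orbit_preimage_subset_orbit_pieces)
  ultimately show ?thesis by (intro exI[of _ "\<lambda>k. orbit_pieces \<F> (\<E> k)"] conjI allI impI) simp_all
qed

text \<open>Block \<open>j\<close> of the cover of \<open>G\<close> refines the preimage of the \<open>j\<close>-th family of a cover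
  of \<open>M\<close> taken at scale \<open>L\<close> times a scale exceeding all scales of that block.\<close>

theorem asymptotic_property_C_carrier:
  assumes propC: "asymptotic_property_C dM M"
    and asdim: "\<forall>R>0. asdim_le dG (quasi_stabilizer G \<phi> dM R x0) n"
  shows "asymptotic_property_C dG (carrier G)"
  unfolding asymptotic_property_C_def
proof (intro allI impI)
  fix r :: "nat \<Rightarrow> real" assume r: "0 < r 0 \<and> strict_mono r"
  obtain L where L: "L > 0" and lip: "\<forall>g\<in>carrier G. \<forall>h\<in>carrier G. dM (\<phi> g x0) (\<phi> h x0) \<le> L * dG g h"
    using orbit_map_lipschitz by blast
  define c where "c j = r (Suc j * Suc n)" for j
  have "strict_mono (\<lambda>j. L * c j)"
  proof (rule strict_monoI)
    fix i j :: nat assume "i < j"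
    then have "Suc i * Suc n < Suc j * Suc n" by (intro mult_less_mono1) simp_all
    then show "L * c i < L * c j" using r L by (simp add: c_def strict_mono_less)
  qed
  moreover have c_pos: "0 < c j" for j using r strict_mono_pos by (simp add: c_def)
  ultimately obtain m \<F> where \<F>: "\<forall>j\<le>m. unif_bounded dM (\<F> j) \<and> r_disjoint dM (L * c j) (\<F> j)"
    and \<F>_cover: "M \<subseteq> (\<Union>j\<le>m. \<Union>(\<F> j))"
    using propC[unfolded asymptotic_property_C_def, rule_format, of "\<lambda>j. L * c j"] L by auto
  have "\<forall>j\<in>{..m}. \<exists>\<C>j. (\<forall>k\<le>n. unif_bounded dG (\<C>j k) \<and> r_disjoint dG (r (j * Suc n + n)) (\<C>j k)
      \<and> (\<forall>Q\<in>\<C>j k. Q \<subseteq> carrier G)) \<and> orbit_preimage (\<Union>(\<F> j)) \<subseteq> (\<Union>k\<le>n. \<Union>(\<C>j k))"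
  proof
    fix j assume "j \<in> {..m}"
    moreover have "r (j * Suc n + n) < c j" using r by (simp add: c_def strict_mono_less)
    ultimately show "\<exists>\<C>j. (\<forall>k\<le>n. unif_bounded dG (\<C>j k) \<and> r_disjoint dG (r (j * Suc n + n)) (\<C>j k)
      \<and> (\<forall>Q\<in>\<C>j k. Q \<subseteq> carrier G)) \<and> orbit_preimage (\<Union>(\<F> j)) \<subseteq> (\<Union>k\<le>n. \<Union>(\<C>j k))"
      using \<F> c_pos by (intro orbit_preimage_refinement[OF asdim lip L]) auto
  qed
  from bchoice[OF this] obtain \<C> where \<C>: "\<forall>j\<in>{..m}. (\<forall>k\<le>n. unif_bounded dG (\<C> j k)
      \<and> r_disjoint dG (r (j * Suc n + n)) (\<C> j k) \<and> (\<forall>Q\<in>\<C> j k. Q \<subseteq> carrier G))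
      \<and> orbit_preimage (\<Union>(\<F> j)) \<subseteq> (\<Union>k\<le>n. \<Union>(\<C> j k))" ..
  have "carrier G \<subseteq> (\<Union>j\<le>m. orbit_preimage (\<Union>(\<F> j)))"
  proof
    fix g assume g: "g \<in> carrier G"
    then have "\<phi> g x0 \<in> M" using basepoint by (rule act_closed)
    then obtain j where "j \<le> m" "\<phi> g x0 \<in> \<Union>(\<F> j)" using \<F>_cover by blast
    then show "g \<in> (\<Union>j\<le>m. orbit_preimage (\<Union>(\<F> j)))" using g by (auto simp: orbit_preimage_def)
  qed
  also have "\<dots> \<subseteq> (\<Union>j\<le>m. \<Union>k\<le>n. \<Union>(\<C> j k))" using \<C> by (intro UN_mono) auto
  finally have cover: "carrier G \<subseteq> (\<Union>j\<le>m. \<Union>k\<le>n. \<Union>(\<C> j k))" .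
  show "\<exists>m' \<C>'. (\<forall>i\<le>m'. unif_bounded dG (\<C>' i) \<and> r_disjoint dG (r i) (\<C>' i)
      \<and> (\<forall>Q\<in>\<C>' i. Q \<subseteq> carrier G)) \<and> carrier G \<subseteq> (\<Union>i\<le>m'. \<Union>(\<C>' i))"
  proof (rule asymptotic_property_C_flatten[OF _ cover])
    fix j k assume "j \<le> m" "k \<le> n"
    then show "unif_bounded dG (\<C> j k) \<and> r_disjoint dG (r (j * Suc n + n)) (\<C> j k)
        \<and> (\<forall>Q\<in>\<C> j k. Q \<subseteq> carrier G)" using \<C> by simp
    show "r (j * Suc n + k) \<le> r (j * Suc n + n)"
      using r \<open>k \<le> n\<close> by (simp add: strict_mono_less_eq)
  qed
qed

end

theorem mainTheorem2:
  fixes G :: "('a, 'c) monoid_scheme" and S :: "'a set"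
    and M :: "'b set" and dM :: "'b \<Rightarrow> 'b \<Rightarrow> real"
    and \<phi> :: "'a \<Rightarrow> 'b \<Rightarrow> 'b" and x0 :: 'b and n :: nat
  assumes "group G"
    and "finite S" and "S \<subseteq> carrier G" and "generate G S = carrier G"
    and "Metric_space M dM"
    and "group_action G M \<phi>"
    and "\<forall>g\<in>carrier G. \<forall>x\<in>M. \<forall>y\<in>M. dM (\<phi> g x) (\<phi> g y) = dM x y"
    and "\<forall>x\<in>M. \<forall>y\<in>M. \<exists>g\<in>carrier G. \<phi> g x = y"
    and "x0 \<in> M"
    and "asymptotic_property_C dM M"
    and "\<forall>R>0. asdim_le (word_dist G S) (quasi_stabilizer G \<phi> dM R x0) n"
  shows "sFDC (word_dist G S) (carrier G)"
proof -
  interpret isometric_action G M \<phi> dM S x0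
    using assms(1-7,9) by (simp add: isometric_action_def isometric_action_axioms_def)
  show ?thesis
    using assms(10,11) by (intro sFDC_if_asymptotic_property_C asymptotic_property_C_carrier)
qed

end
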